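(* Let $\mu>\lambda$, $c\in\mathbb C^2\setminus\{0\}$ and $\eta_{PC}\in\mathbb C$. If $PC\,f_{c\,\nu,\mathbf p}=\eta_{PC}\,f_{c\,\nu,\mathbf p}$ for all $\mathbf p\in\mathbb R^3$, then $|\eta_{PC}|=1$ and $c$ is a null vector, $\langle c\cdot c\rangle=0$. In particular no $c$-basis (with $\langle c\cdot c\rangle=1$) consists of $PC$-invariant mode functions.
   Context: Fix $\omega>0$; work in the conformal chart $(t,\mathbf x)$, $t<0$, $\mathbf x\in\mathbb R^3$, of de Sitter spacetime. Let $\mu=m/\omega$ ($m$ the mass), $\lambda>0$ the coupling constant, $\mu>\lambda$, $\nu=\sqrt{\mu^2-\lambda^2}>0$. For $\mathbf p\in\mathbb R^3$, $p=|\mathbf p|$, let $u_{\nu,\mathbf p}(t,\mathbf x)=\sqrt{\pi/\omega}\,(2\sinh\pi\nu)^{-1/2}(2\pi)^{-3/2}(-\omega t)^{3/2}J_{i\nu}(-pt)\,e^{i\mathbf x\cdot\mathbf p}$ ($J_a$ the Bessel function of the first kind). On $\mathbb C^2$ use $\langle c\cdot c'\rangle=c_1^*c_1'-c_2^*c_2'$. For $c=(c_1,c_2)\in\mathbb C^2$ set $f_{c\,\nu,\mathbf p}=c_1u_{\nu,\mathbf p}+c_2u^*_{\nu,-\mathbf p}$. Operators: $(Pf)(t,\mathbf x)=f(t,-\mathbf x)$, $Cf=f^*$, and $PC=P\circ C$. *)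

theory Defs
  imports "HOL-Analysis.Analysis"
begin

definition besselJ :: "complex \<Rightarrow> real \<Rightarrow> complex" where
  "besselJ a z = (\<Sum>k. (-1) ^ k / (of_nat (fact k) * Gamma (of_nat k + a + 1))
                        * (complex_of_real (z / 2)) powr (of_nat (2 * k) + a))"

text \<open>Mode function u_{nu,p}(t,x) on the conformal chart t < 0 of de Sitter space.\<close>
definition mode_u :: "real \<Rightarrow> real \<Rightarrow> real^3 \<Rightarrow> real \<Rightarrow> real^3 \<Rightarrow> complex" where
  "mode_u \<omega> \<nu> p t x =
     complex_of_real (sqrt (pi / \<omega>) * (1 / sqrt (2 * sinh (pi * \<nu>))) * (2 * pi) powr (-3/2)
                      * (- \<omega> * t) powr (3/2))
     * besselJ (\<i> * complex_of_real \<nu>) (- norm p * t)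
     * exp (\<i> * complex_of_real (x \<bullet> p))"

definition mode_f :: "real \<Rightarrow> complex \<times> complex \<Rightarrow> real \<Rightarrow> real^3 \<Rightarrow> real \<Rightarrow> real^3 \<Rightarrow> complex" where
  "mode_f \<omega> c \<nu> p t x = fst c * mode_u \<omega> \<nu> p t x + snd c * cnj (mode_u \<omega> \<nu> (- p) t x)"

definition cprod :: "complex \<times> complex \<Rightarrow> complex \<times> complex \<Rightarrow> complex" where
  "cprod c c' = cnj (fst c) * fst c' - cnj (snd c) * snd c'"

definition PC_op :: "(real \<Rightarrow> real^3 \<Rightarrow> complex) \<Rightarrow> real \<Rightarrow> real^3 \<Rightarrow> complex" where
  "PC_op f t x = cnj (f t (- x))"

end

theory Submission
  imports Defs "HOL-Real_Asymp.Real_Asymp"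
begin

text \<open>Evaluating the eigenvalue equation at x = 0 and |p| = 1 turns it into the relation
  a J(s) + b J(s)^* = 0 for all s > 0, where J = J_{i\<nu>}, a = c_2^* - \<eta> c_1 and b = c_1^* - \<eta> c_2.
  Near 0, J(s) = (s/2)^{i\<nu>} G((s/2)^2) with G continuous and G(0) = 1/\<Gamma>(1 + i\<nu>) \<noteq> 0, while the
  phase (s/2)^{i\<nu>} keeps rotating as s \<rightarrow> 0. Multiplying by the phase and letting s \<rightarrow> 0 along the
  points where its square is +1, resp. -1, gives a G(0) + b G(0)^* = 0 = -a G(0) + b G(0)^*,
  so a = b = 0. Then c_2^* = \<eta> c_1 and c_1^* = \<eta> c_2 force |\<eta>| = 1 and |c_1| = |c_2|.\<close>

definition besselJ_coeff :: "complex \<Rightarrow> nat \<Rightarrow> complex" where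
  "besselJ_coeff a k = (-1) ^ k * rGamma (of_nat k + a + 1) / of_nat (fact k)"

text \<open>The series G_a with J_a(z) = (z/2)^a G_a((z/2)^2).\<close>
definition besselJ_reduced :: "complex \<Rightarrow> complex \<Rightarrow> complex" where
  "besselJ_reduced a w = (\<Sum>k. besselJ_coeff a k * w ^ k)"

lemma not_nonpos_Int_if_Re_pos:
  fixes z :: complex
  assumes "0 < Re z"
  shows "z \<notin> \<int>\<^sub>\<le>\<^sub>0"
  using assms by (auto elim!: nonpos_Ints_cases)

lemma norm_rGamma_plus_nat_le:
  fixes z :: complex
  assumes "1 \<le> Re z"
  shows "norm (rGamma (z + of_nat k)) \<le> norm (rGamma z)"
proof (induction k)
  case 0
  then show ?case by simp
next
  case (Suc k)
  let ?w = "z + of_nat k"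
  have "1 \<le> Re ?w" using assms by simp
  also have "\<dots> \<le> norm ?w" by (rule complex_Re_le_cmod)
  finally have "norm (rGamma (?w + 1)) \<le> norm ?w * norm (rGamma (?w + 1))"
    by (simp add: mult_le_cancel_right1)
  also have "\<dots> = norm (rGamma ?w)"
    by (metis norm_mult rGamma_plus1)
  finally show ?case using Suc.IH by (simp add: add_ac)
qed

lemma norm_besselJ_coeff_le:
  assumes "0 \<le> Re a"
  shows "norm (besselJ_coeff a k) \<le> norm (rGamma (a + 1))"
proof -
  have "norm (rGamma (a + 1 + of_nat k)) \<le> norm (rGamma (a + 1))"
    using assms by (intro norm_rGamma_plus_nat_le) simp
  moreover have "norm (rGamma (a + 1 + of_nat k)) / fact k \<le> norm (rGamma (a + 1 + of_nat k))"
    by (simp add: divide_le_eq mult_le_cancel_left1)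
  ultimately show ?thesis
    unfolding besselJ_coeff_def by (simp add: norm_mult norm_divide norm_power add_ac)
qed

lemma summable_besselJ_series:
  assumes "0 \<le> Re a" and "norm w < 1"
  shows "summable (\<lambda>k. besselJ_coeff a k * w ^ k)"
proof (rule summable_comparison_test)
  show "\<exists>N. \<forall>k\<ge>N. norm (besselJ_coeff a k * w ^ k) \<le> norm (rGamma (a + 1)) * norm w ^ k"
    using norm_besselJ_coeff_le[OF assms(1)]
    by (auto simp: norm_mult norm_power intro!: mult_right_mono)
  show "summable (\<lambda>k. norm (rGamma (a + 1)) * norm w ^ k)"
    using assms(2) by (intro summable_mult summable_geometric) simp
qed

lemma isCont_besselJ_reduced_0:
  assumes "0 \<le> Re a"
  shows "isCont (besselJ_reduced a) 0"
proof -
  have "summable (\<lambda>k. besselJ_coeff a k * (1/2) ^ k)"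
    using summable_besselJ_series[OF assms, of "1/2"] by simp
  then show ?thesis
    unfolding besselJ_reduced_def[abs_def] by (rule isCont_powser) simp
qed

lemma besselJ_reduced_0_nonzero:
  assumes "0 \<le> Re a"
  shows "besselJ_reduced a 0 \<noteq> 0"
proof -
  have "besselJ_reduced a 0 = rGamma (a + 1)"
    unfolding besselJ_reduced_def using powser_zero[of "besselJ_coeff a"]
    by (simp add: besselJ_coeff_def)
  moreover have "a + 1 \<notin> \<int>\<^sub>\<le>\<^sub>0"
    using assms by (intro not_nonpos_Int_if_Re_pos) simp
  ultimately show ?thesis by (simp add: rGamma_eq_zero_iff)
qed

lemma besselJ_eq_powr_reduced:
  assumes "0 \<le> Re a" and "0 < s" and "s < 2"
  shows "besselJ a s = of_real (s / 2) powr a * besselJ_reduced a (of_real ((s / 2)\<^sup>2))"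
proof -
  let ?x = "complex_of_real (s / 2)"
  have "(s / 2)\<^sup>2 < 1"
    using assms by (simp add: power_less_one_iff)
  then have "norm (complex_of_real ((s / 2)\<^sup>2)) < 1"
    by (simp only: norm_of_real) simp
  then have sum: "summable (\<lambda>k. besselJ_coeff a k * of_real ((s / 2)\<^sup>2) ^ k)"
    by (rule summable_besselJ_series[OF assms(1)])
  have "besselJ a s = (\<Sum>k. besselJ_coeff a k * of_real ((s / 2)\<^sup>2) ^ k * ?x powr a)"
    unfolding besselJ_def
  proof (rule suminf_cong)
    fix k
    have "?x powr of_nat (2 * k) = of_real ((s / 2)\<^sup>2) ^ k"
      using assms(2) by (subst powr_complexpow) (auto simp: power_mult)
    then have power: "?x powr (of_nat (2 * k) + a) = of_real ((s / 2)\<^sup>2) ^ k * ?x powr a"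
      by (simp only: powr_add)
    have coeff: "(-1) ^ k / (of_nat (fact k) * Gamma (of_nat k + a + 1)) = besselJ_coeff a k"
      by (simp add: besselJ_coeff_def rGamma_inverse_Gamma divide_inverse)
    then show "(-1) ^ k / (of_nat (fact k) * Gamma (of_nat k + a + 1)) * ?x powr (of_nat (2 * k) + a)
        = besselJ_coeff a k * of_real ((s / 2)\<^sup>2) ^ k * ?x powr a"
      by (simp only: coeff power mult.assoc)
  qed
  also have "\<dots> = besselJ_reduced a (of_real ((s / 2)\<^sup>2)) * ?x powr a"
    unfolding besselJ_reduced_def by (rule suminf_mult2[symmetric, OF sum])
  finally show ?thesis by (simp add: mult.commute)
qed

lemma besselJ_imag_order_at_exp:
  fixes \<nu> L :: real
  assumes "L < 0"
  shows "besselJ (\<i> * of_real \<nu>) (2 * exp L)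
    = exp (\<i> * of_real (\<nu> * L)) * besselJ_reduced (\<i> * of_real \<nu>) (of_real (exp (2 * L)))"
proof -
  have "(exp L)\<^sup>2 = exp (2 * L)"
    by (simp add: power2_eq_square exp_add[symmetric])
  moreover have "of_real (exp L) powr (\<i> * of_real \<nu>) = exp (\<i> * of_real (\<nu> * L))"
    by (simp add: powr_def Ln_of_real mult_ac)
  ultimately show ?thesis
    using besselJ_eq_powr_reduced[of "\<i> * of_real \<nu>" "2 * exp L"] assms by simp
qed

lemma besselJ_imag_order_alternating:
  fixes \<nu> :: real
  assumes "0 < \<nu>" and "0 < k"
    and relation: "\<forall>s>0. a * besselJ (\<i> * of_real \<nu>) s + b * cnj (besselJ (\<i> * of_real \<nu>) s) = 0"
  defines "G \<equiv> besselJ_reduced (\<i> * of_real \<nu>) (of_real (exp (- pi * real k / \<nu>)))"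
  shows "(-1) ^ k * a * G + b * cnj G = 0"
proof -
  define L where "L = - pi * real k / (2 * \<nu>)"
  define E where "E = exp (\<i> * of_real (\<nu> * L))"
  have "L < 0" using assms by (simp add: L_def divide_neg_pos)
  then have J: "besselJ (\<i> * of_real \<nu>) (2 * exp L) = E * G"
    using besselJ_imag_order_at_exp[of L \<nu>] assms by (simp add: E_def G_def L_def)
  have unit: "E * cnj E = 1"
    by (simp add: E_def exp_cnj exp_add[symmetric])
  have square: "E * E = (-1) ^ k"
  proof -
    have "E * E = exp (of_nat k * (- (of_real pi * \<i>)))"
      using assms(1) by (simp add: E_def L_def exp_add[symmetric] algebra_simps)
    also have "\<dots> = exp (- (of_real pi * \<i>)) ^ k"
      by (rule exp_of_nat_mult)
    also have "\<dots> = (-1) ^ k"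
      by (simp add: exp_minus)
    finally show ?thesis .
  qed
  have "(-1) ^ k * a * G + b * cnj G = (E * E) * a * G + b * (E * cnj E) * cnj G"
    by (simp only: unit square mult_1_right)
  also have "\<dots> = E * (a * besselJ (\<i> * of_real \<nu>) (2 * exp L) + b * cnj (besselJ (\<i> * of_real \<nu>) (2 * exp L)))"
    unfolding J by (simp add: algebra_simps)
  also have "\<dots> = 0"
    using relation by simp
  finally show ?thesis .
qed

lemma cnj_relation_at_limit:
  fixes g :: "complex \<Rightarrow> complex"
  assumes "isCont g 0" and "x \<longlonglongrightarrow> 0"
    and "\<And>n. w * g (x n) + b * cnj (g (x n)) = 0"
  shows "w * g 0 + b * cnj (g 0) = 0"
proof -
  have "(\<lambda>n. w * g (x n) + b * cnj (g (x n))) \<longlonglongrightarrow> w * g 0 + b * cnj (g 0)"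
    using isCont_tendsto_compose[OF assms(1,2)] by (intro tendsto_intros)
  then show ?thesis
    using assms(3) by (simp add: LIMSEQ_const_iff)
qed

lemma besselJ_imag_order_cnj_independent:
  fixes \<nu> :: real
  assumes "0 < \<nu>"
    and relation: "\<forall>s>0. a * besselJ (\<i> * of_real \<nu>) s + b * cnj (besselJ (\<i> * of_real \<nu>) s) = 0"
  shows "a = 0 \<and> b = 0"
proof -
  let ?G = "besselJ_reduced (\<i> * of_real \<nu>)"
  let ?x = "\<lambda>k. complex_of_real (exp (- pi * real k / \<nu>))"
  have cont: "isCont ?G 0"
    by (rule isCont_besselJ_reduced_0) simp
  have "(\<lambda>n. exp (- pi * real (2 * n + 2) / \<nu>)) \<longlonglongrightarrow> 0"
    using assms(1) by real_asymp
  then have "(\<lambda>n. ?x (2 * n + 2)) \<longlonglongrightarrow> 0"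
    using tendsto_of_real by fastforce
  then have even: "a * ?G 0 + b * cnj (?G 0) = 0"
    using besselJ_imag_order_alternating[OF assms(1) _ relation, of "2 * _ + 2"]
    by (intro cnj_relation_at_limit[OF cont]) auto
  have "(\<lambda>n. exp (- pi * real (2 * n + 1) / \<nu>)) \<longlonglongrightarrow> 0"
    using assms(1) by real_asymp
  then have "(\<lambda>n. ?x (2 * n + 1)) \<longlonglongrightarrow> 0"
    using tendsto_of_real by fastforce
  then have odd: "- a * ?G 0 + b * cnj (?G 0) = 0"
    using besselJ_imag_order_alternating[OF assms(1) _ relation, of "2 * _ + 1"]
    by (intro cnj_relation_at_limit[OF cont]) auto
  have "?G 0 \<noteq> 0"
    by (rule besselJ_reduced_0_nonzero) simp
  moreover have "2 * a * ?G 0 = 0"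
    using even odd by (simp add: algebra_simps)
  ultimately have "a = 0"
    by simp
  with even \<open>?G 0 \<noteq> 0\<close> show ?thesis
    by simp
qed

lemma mode_u_at_origin:
  assumes "norm p = 1" and "0 < s"
  shows "mode_u \<omega> \<nu> p (- s) 0
    = of_real (sqrt (pi / \<omega>) * (1 / sqrt (2 * sinh (pi * \<nu>))) * (2 * pi) powr (-3/2) * (\<omega> * s) powr (3/2))
      * besselJ (\<i> * of_real \<nu>) s"
  using assms by (simp add: mode_u_def)

lemma PC_eigen_besselJ_relation:
  assumes "0 < \<omega>" and "0 < \<nu>" and "0 < s"
    and eigen: "\<forall>p t x. t < 0 \<longrightarrow> PC_op (mode_f \<omega> c \<nu> p) t x = \<eta> * mode_f \<omega> c \<nu> p t x"
  shows "(cnj (snd c) - \<eta> * fst c) * besselJ (\<i> * of_real \<nu>) s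
       + (cnj (fst c) - \<eta> * snd c) * cnj (besselJ (\<i> * of_real \<nu>) s) = 0"
proof -
  define A where "A = sqrt (pi / \<omega>) * (1 / sqrt (2 * sinh (pi * \<nu>))) * (2 * pi) powr (-3/2) * (\<omega> * s) powr (3/2)"
  define J where "J = besselJ (\<i> * of_real \<nu>) s"
  define p :: "real^3" where "p = axis 1 1"
  have "sinh (pi * \<nu>) > 0"
    using assms(2) by (simp add: sinh_real_pos_iff)
  then have "A \<noteq> 0"
    using assms(1-3) by (simp add: A_def)
  have "norm p = 1" "norm (- p) = 1"
    by (simp_all add: p_def)
  then have u: "mode_u \<omega> \<nu> p (- s) 0 = of_real A * J" "mode_u \<omega> \<nu> (- p) (- s) 0 = of_real A * J"
    using mode_u_at_origin assms(3) by (simp_all add: A_def J_def)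
  have "PC_op (mode_f \<omega> c \<nu> p) (- s) 0 = \<eta> * mode_f \<omega> c \<nu> p (- s) 0"
    using eigen assms(3) by simp
  then have "cnj (fst c * (of_real A * J) + snd c * cnj (of_real A * J))
      = \<eta> * (fst c * (of_real A * J) + snd c * cnj (of_real A * J))"
    unfolding PC_op_def mode_f_def using u by simp
  then have "of_real A * ((cnj (snd c) - \<eta> * fst c) * J + (cnj (fst c) - \<eta> * snd c) * cnj J) = 0"
    by (simp add: algebra_simps)
  with \<open>A \<noteq> 0\<close> show ?thesis
    by (simp add: J_def)
qed

lemma cnj_swap_eigenvalue:
  fixes c1 c2 \<eta> :: complex
  assumes "cnj c2 = \<eta> * c1" and "cnj c1 = \<eta> * c2" and "(c1, c2) \<noteq> (0, 0)"
  shows "cmod \<eta> = 1 \<and> cmod c1 = cmod c2"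
proof -
  have "cmod c2 = cmod \<eta> * cmod c1" "cmod c1 = cmod \<eta> * cmod c2"
    using arg_cong[OF assms(1), of cmod] arg_cong[OF assms(2), of cmod] by (simp_all add: norm_mult)
  then have "cmod c1 = (cmod \<eta>)\<^sup>2 * cmod c1" "cmod c2 = (cmod \<eta>)\<^sup>2 * cmod c2"
    by (simp_all add: power2_eq_square)
  moreover have "cmod c1 \<noteq> 0 \<or> cmod c2 \<noteq> 0"
    using assms(3) by auto
  ultimately have "(cmod \<eta>)\<^sup>2 = 1"
    by auto
  then have "cmod \<eta> = 1"
    using norm_ge_zero[of \<eta>] by (auto simp: power2_eq_1_iff)
  with \<open>cmod c1 = cmod \<eta> * cmod c2\<close> show ?thesis
    by simp
qed

theorem corollary2:
  fixes \<omega> mu lam \<nu> :: real and c :: "complex \<times> complex" and \<eta> :: complex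
  assumes "\<omega> > 0" and "lam > 0" and "mu > lam"
    and "\<nu> = sqrt (mu\<^sup>2 - lam\<^sup>2)"
    and "c \<noteq> (0, 0)"
    and "\<forall>p t x. t < 0 \<longrightarrow> PC_op (mode_f \<omega> c \<nu> p) t x = \<eta> * mode_f \<omega> c \<nu> p t x"
  shows "cmod \<eta> = 1 \<and> cprod c c = 0"
proof -
  obtain c1 c2 where c: "c = (c1, c2)"
    by (cases c)
  have "lam\<^sup>2 < mu\<^sup>2"
    using assms(2,3) by (simp add: power_strict_mono)
  then have "0 < \<nu>"
    using assms(4) by simp
  then have "cnj c2 - \<eta> * c1 = 0 \<and> cnj c1 - \<eta> * c2 = 0"
    using PC_eigen_besselJ_relation[OF assms(1) _ _ assms(6)] c
    by (intro besselJ_imag_order_cnj_independent) auto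
  then have "cmod \<eta> = 1 \<and> cmod c1 = cmod c2"
    using assms(5) c by (intro cnj_swap_eigenvalue) auto
  moreover from this have "cnj c1 * c1 = cnj c2 * c2"
    by (metis complex_norm_square mult.commute)
  ultimately show ?thesis
    by (simp add: c cprod_def)
qed

end
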